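(* Let $p(t)=\sum_{k=0}^\infty a_kt^k$ be a power series with $0\le a_k<1$ for all $k\ge0$ and $\sum_{k=0}^\infty a_k=1$. Let $p^{[1]}(t)=p(t)$, $p^{[n+1]}(t)=p(p^{[n]}(t))$, and write $p^{[n]}(t)=\sum_{k=0}^\infty a_k^{[n]}t^k$, $a^{[n]}=\sup\{a_k^{[n]}: k\ge1\}$. Then $(a_0^{[n]})_{n\in\mathbb N}$ is monotone increasing, $(a^{[n]})_{n\in\mathbb N}$ is monotone decreasing, and $\lim_{n\to\infty}a^{[n]}=0$.
   Context: Composition is composition of formal power series; since the coefficients are nonnegative and sum to $1$, each $p^{[n]}$ is well defined, has nonnegative coefficients, and $\sum_k a_k^{[n]}=1$. "Monotone increasing/decreasing" means non-strict monotonicity. *)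

theory Defs
  imports "HOL-Analysis.Analysis" "HOL-Computational_Algebra.Formal_Power_Series"
begin

text \<open>This is well defined (convergent) when the
  coefficients of p and q are nonnegative and sum to 1.\<close>
definition fps_comp_gen :: "real fps \<Rightarrow> real fps \<Rightarrow> real fps" where
  "fps_comp_gen p q = Abs_fps (\<lambda>k. \<Sum>j. fps_nth p j * fps_nth (q ^ j) k)"

text \<open>Iterates: fps_iter p 1 = p, fps_iter p (n+1) = p(fps_iter p n).
  The value at 0 (identity series X) is never used by the statement.\<close>
fun fps_iter :: "real fps \<Rightarrow> nat \<Rightarrow> real fps" where
  "fps_iter p 0 = fps_X"
| "fps_iter p (Suc 0) = p"
| "fps_iter p (Suc (Suc n)) = fps_comp_gen p (fps_iter p (Suc n))"

definition sup_coeff :: "real fps \<Rightarrow> real" where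
  "sup_coeff q = (SUP k\<in>{1..}. fps_nth q k)"

end

theory Submission
  imports Defs "HOL-Probability.Probability_Mass_Function"
begin

text \<open>
  Read p as the offspring law of a Galton-Watson process started from one individual: the
  coefficients of the n-th iterate form the law of the n-th generation Z_n, which is the sum of
  Z_(n-1) independent copies of Z_1 and also the sum of Z_1 independent copies of Z_(n-1).
  So a_0^[n] = P(Z_n = 0) is the probability of extinction by time n, which increases with n.
  With q = P(Z_n = 0) and b = a^[n], an i-fold convolution of the law of Z_n puts mass at most
  b (1 + q + ... + q^(i-1)) = b (1 - q^i) / (1 - q) on each k >= 1; averaging over i ~ Z_1
  gives a^[n+1] <= b (1 - P(Z_(n+1) = 0)) / (1 - q) <= b.

  For the limit, every mass P(Z_n = i) with i >= 1 tends to 0: if p_0 > 0 it is dominated by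
  the increments of the convergent sequence P(Z_n = 0), and if p_0 = 0 the mass at i contracts
  with factor p_1 < 1 up to the masses below i.  Since p is not a point mass, the largest mass
  of its j-fold convolution also tends to 0 as j grows.  Splitting Z_(n+1) according to whether
  Z_n <= J bounds a^[n+1] by P(1 <= Z_n <= J) plus the largest mass of the (J+1)-fold
  convolution of p.
\<close>

section \<open>Convolution powers and compound distributions\<close>

definition conv_pmf :: "'a::monoid_add pmf \<Rightarrow> 'a pmf \<Rightarrow> 'a pmf" where
  "conv_pmf A B = bind_pmf A (\<lambda>a. map_pmf ((+) a) B)"

fun conv_pow_pmf :: "nat \<Rightarrow> 'a::monoid_add pmf \<Rightarrow> 'a pmf" where
  "conv_pow_pmf 0 A = return_pmf 0"
| "conv_pow_pmf (Suc j) A = conv_pmf A (conv_pow_pmf j A)"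

lemma conv_pmf_bind: "conv_pmf A B = bind_pmf A (\<lambda>a. bind_pmf B (\<lambda>b. return_pmf (a + b)))"
  by (simp add: conv_pmf_def map_pmf_def)

lemma conv_pmf_assoc: "conv_pmf A (conv_pmf B C) = conv_pmf (conv_pmf A B) C"
  by (simp add: conv_pmf_bind bind_assoc_pmf bind_return_pmf add.assoc)

lemma conv_pmf_zero_left [simp]: "conv_pmf (return_pmf 0) B = B"
  by (simp add: conv_pmf_bind bind_return_pmf bind_return_pmf')

lemma conv_pmf_zero_right [simp]: "conv_pmf A (return_pmf 0) = A"
  by (simp add: conv_pmf_bind bind_return_pmf bind_return_pmf')

lemma conv_pow_pmf_add: "conv_pow_pmf (a + b) X = conv_pmf (conv_pow_pmf a X) (conv_pow_pmf b X)"
  by (induction a) (simp_all add: conv_pmf_assoc)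

lemma conv_pow_pmf_return: "conv_pow_pmf j (return_pmf (1::nat)) = return_pmf j"
  by (induction j) (simp_all add: conv_pmf_bind bind_return_pmf)

text \<open>The generating function of \<^term>\<open>compound_pmf N Y\<close> is that of N composed with that
  of Y, so composition of power series becomes compounding of distributions.\<close>

definition compound_pmf :: "nat pmf \<Rightarrow> 'a::monoid_add pmf \<Rightarrow> 'a pmf" where
  "compound_pmf N Y = bind_pmf N (\<lambda>i. conv_pow_pmf i Y)"

lemma compound_pmf_return_one [simp]: "compound_pmf N (return_pmf 1) = N"
  unfolding compound_pmf_def conv_pow_pmf_return by (rule bind_return_pmf')

lemma compound_pmf_return [simp]: "compound_pmf (return_pmf j) Y = conv_pow_pmf j Y"
  by (simp add: compound_pmf_def bind_return_pmf)

lemma compound_pmf_conv: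
  "compound_pmf (conv_pmf A B) Y = conv_pmf (compound_pmf A Y) (compound_pmf B Y)"
proof -
  have "compound_pmf (conv_pmf A B) Y =
      bind_pmf A (\<lambda>a. bind_pmf B (\<lambda>b. conv_pmf (conv_pow_pmf a Y) (conv_pow_pmf b Y)))"
    by (simp add: compound_pmf_def conv_pmf_bind bind_assoc_pmf bind_return_pmf conv_pow_pmf_add)
  also have "\<dots> = bind_pmf A (\<lambda>a. bind_pmf (conv_pow_pmf a Y) (\<lambda>x.
      bind_pmf B (\<lambda>b. bind_pmf (conv_pow_pmf b Y) (\<lambda>y. return_pmf (x + y)))))"
    by (simp add: conv_pmf_bind) (subst bind_commute_pmf, rule refl)
  also have "\<dots> = conv_pmf (compound_pmf A Y) (compound_pmf B Y)"
    by (simp add: compound_pmf_def conv_pmf_bind bind_assoc_pmf)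
  finally show ?thesis .
qed

lemma compound_pmf_conv_pow:
  "compound_pmf (conv_pow_pmf j N) Y = conv_pow_pmf j (compound_pmf N Y)"
  by (induction j) (simp_all add: compound_pmf_conv)

lemma compound_pmf_assoc:
  "compound_pmf (compound_pmf N X) Y = compound_pmf N (compound_pmf X Y)"
  by (simp add: compound_pmf_def bind_assoc_pmf compound_pmf_conv_pow[unfolded compound_pmf_def])

fun gw_pmf :: "nat pmf \<Rightarrow> nat \<Rightarrow> nat pmf" where
  "gw_pmf P 0 = return_pmf 1"
| "gw_pmf P (Suc n) = compound_pmf P (gw_pmf P n)"

lemma gw_pmf_Suc': "gw_pmf P (Suc n) = compound_pmf (gw_pmf P n) P"
proof (induction n)
  case 0
  show ?case using compound_pmf_return_one[of P] by simp
next
  case (Suc n)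
  have "gw_pmf P (Suc (Suc n)) = compound_pmf P (compound_pmf (gw_pmf P n) P)"
    by (simp only: gw_pmf.simps(2)[of P "Suc n"] Suc.IH)
  then show ?case by (simp add: compound_pmf_assoc)
qed

lemma pmf_map_add_nat:
  "pmf (map_pmf ((+) (a::nat)) B) k = (if a \<le> k then pmf B (k - a) else 0)"
proof (cases "a \<le> k")
  case True
  have "pmf (map_pmf ((+) a) B) (a + (k - a)) = pmf B (k - a)"
    by (rule pmf_map_inj') (auto simp: inj_def)
  with True show ?thesis by simp
qed (auto intro: pmf_map_outside)

lemma pmf_conv_pmf_nat: "pmf (conv_pmf A B) (k::nat) = (\<Sum>i\<le>k. pmf A i * pmf B (k - i))"
proof -
  have "pmf (conv_pmf A B) k = measure_pmf.expectation A (\<lambda>a. pmf (map_pmf ((+) a) B) k)"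
    by (simp add: conv_pmf_def pmf_bind)
  also have "\<dots> = (\<Sum>i\<le>k. pmf (map_pmf ((+) i) B) k * pmf A i)"
    by (rule integral_measure_pmf_real) (auto simp: pmf_map_add_nat split: if_splits)
  finally show ?thesis
    by (simp add: pmf_map_add_nat mult.commute)
qed

lemma pmf_compound_pmf:
  "pmf (compound_pmf N Y) k = measure_pmf.expectation N (\<lambda>i. pmf (conv_pow_pmf i Y) k)"
  by (simp add: compound_pmf_def pmf_bind)

section \<open>Coefficients of compositions as probabilities\<close>

lemma integrable_measure_pmf_bounded:
  fixes h :: "'a \<Rightarrow> real"
  assumes "\<And>x. \<bar>h x\<bar> \<le> B"
  shows "integrable (measure_pmf X) h"
  by (rule measure_pmf.integrable_const_bound[where B=B]) (use assms in auto)

lemma expectation_nat_pmf_eq_suminf: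
  fixes h :: "nat \<Rightarrow> real"
  assumes "\<And>n. \<bar>h n\<bar> \<le> B"
  shows "measure_pmf.expectation X h = (\<Sum>n. pmf X n * h n)"
proof -
  have "summable (\<lambda>n. pmf X n)"
    using integrable_pmf[of UNIV X] unfolding integrable_count_space_nat_iff by simp
  then have "summable (\<lambda>n. norm (pmf X n * h n))"
    by (rule summable_comparison_test'[OF summable_mult2[where c=B], where N=0])
       (use assms in \<open>auto simp: abs_mult intro!: mult_left_mono\<close>)
  then have "integrable (count_space UNIV) (\<lambda>n. pmf X n * h n)"
    unfolding integrable_count_space_nat_iff .
  then show ?thesis
    unfolding measure_pmf_eq_density
    by (subst integral_density) (auto intro: integral_count_space_nat)
qed

lemma pmf_embed_pmf_sums:
  fixes f :: "nat \<Rightarrow> real"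
  assumes "\<And>k. 0 \<le> f k" "f sums 1"
  shows "pmf (embed_pmf f) k = f k"
proof (rule pmf_embed_pmf)
  have "(\<integral>\<^sup>+ x. ennreal (f x) \<partial>count_space UNIV) = ennreal (suminf f)"
    by (simp add: nn_integral_count_space_nat suminf_ennreal2 assms sums_summable[OF assms(2)])
  then show "(\<integral>\<^sup>+ x. ennreal (f x) \<partial>count_space UNIV) = 1"
    using assms(2) by (simp add: sums_iff)
qed (rule assms(1))

lemma fps_nth_power_eq_pmf:
  assumes "\<And>k. fps_nth q k = pmf Q k"
  shows "fps_nth (q ^ j) k = pmf (conv_pow_pmf j Q) k"
proof (induction j arbitrary: k)
  case (Suc j)
  then show ?case
    by (simp add: fps_mult_nth atLeast0AtMost assms pmf_conv_pmf_nat)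
qed (simp add: pmf_return)

lemma fps_nth_comp_gen_eq_pmf:
  assumes "\<And>k. fps_nth p k = pmf P k" "\<And>k. fps_nth q k = pmf Q k"
  shows "fps_nth (fps_comp_gen p q) k = pmf (compound_pmf P Q) k"
proof -
  have "fps_nth (fps_comp_gen p q) k = (\<Sum>j. pmf P j * pmf (conv_pow_pmf j Q) k)"
    by (simp add: fps_comp_gen_def assms(1) fps_nth_power_eq_pmf[OF assms(2)])
  also have "\<dots> = measure_pmf.expectation P (\<lambda>j. pmf (conv_pow_pmf j Q) k)"
    by (rule expectation_nat_pmf_eq_suminf[symmetric, where B=1]) (simp add: pmf_le_1)
  finally show ?thesis
    by (simp add: pmf_compound_pmf)
qed

lemma fps_nth_iter_eq_pmf:
  assumes "\<And>k. fps_nth p k = pmf P k"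
  shows "fps_nth (fps_iter p n) k = pmf (gw_pmf P n) k"
proof (induction n arbitrary: k)
  case (Suc n)
  have comp: "fps_nth (fps_comp_gen p (fps_iter p n)) k = pmf (compound_pmf P (gw_pmf P n)) k"
    by (rule fps_nth_comp_gen_eq_pmf[OF assms Suc.IH])
  show ?case
  proof (cases n)
    case 0
    show ?thesis
      using compound_pmf_return_one[of P] by (simp add: 0 assms)
  qed (use comp in simp)
qed (simp add: pmf_return fps_X_def)

section \<open>Mass at zero and the supremum of the positive masses\<close>

lemma pmf_conv_pow_pmf_zero: "pmf (conv_pow_pmf j Y) (0::nat) = pmf Y 0 ^ j"
  by (induction j) (simp_all add: pmf_conv_pmf_nat pmf_return)

lemma pmf_compound_pmf_zero:
  "pmf (compound_pmf N Y) (0::nat) = measure_pmf.expectation N (\<lambda>i. pmf Y 0 ^ i)"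
  by (simp add: pmf_compound_pmf pmf_conv_pow_pmf_zero)

lemma sum_pmf_mult_le_expectation:
  fixes h :: "'a \<Rightarrow> real"
  assumes "finite A" "\<And>x. 0 \<le> h x" "\<And>x. h x \<le> B"
  shows "(\<Sum>a\<in>A. pmf X a * h a) \<le> measure_pmf.expectation X h"
proof -
  have "(\<Sum>a\<in>A. pmf X a * h a) = measure_pmf.expectation X (\<lambda>x. indicator A x * h x)"
    by (subst integral_measure_pmf_real[where A=A]) (auto simp: assms mult.commute indicator_def)
  also have "\<dots> \<le> measure_pmf.expectation X h"
    using assms(2,3) order_trans[OF assms(2) assms(3)]
    by (intro integral_mono integrable_measure_pmf_bounded[where B=B])
       (auto split: split_indicator)
  finally show ?thesis .
qed

lemma expectation_le_pmf_split:
  fixes h :: "'a \<Rightarrow> real"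
  assumes "\<And>x. 0 \<le> h x" "\<And>x. x \<noteq> u \<Longrightarrow> h x \<le> B"
  shows "measure_pmf.expectation X h \<le> pmf X u * h u + (1 - pmf X u) * B"
proof -
  have h_le: "h x \<le> B + (h u - B) * indicator {u} x" for x
    using assms(2)[of x] by (cases "x = u") auto
  have "\<bar>h x\<bar> \<le> \<bar>B\<bar> + \<bar>h u\<bar>" for x
    using assms(1)[of x] h_le[of x] by (cases "x = u") auto
  then have "measure_pmf.expectation X h
      \<le> measure_pmf.expectation X (\<lambda>x. B + (h u - B) * indicator {u} x)"
    using h_le
    by (intro integral_mono integrable_measure_pmf_bounded[where B="\<bar>B\<bar> + \<bar>h u\<bar>"])
       (auto split: split_indicator)
  also have "\<dots> = B + (h u - B) * pmf X u"
    by (subst Bochner_Integration.integral_add)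
       (auto intro!: integrable_measure_pmf_bounded[where B=1] simp: measure_pmf_single)
  finally show ?thesis
    by (simp add: algebra_simps)
qed

lemma pmf_compound_pmf_zero_ge_add:
  fixes Y :: "nat pmf"
  assumes "1 \<le> j"
  shows "pmf N 0 + pmf N j * pmf Y 0 ^ j \<le> pmf (compound_pmf N Y) 0"
  using sum_pmf_mult_le_expectation[of "{0, j}" "\<lambda>i. pmf Y 0 ^ i" 1 N] assms
  by (simp add: pmf_compound_pmf_zero power_le_one pmf_le_1)

lemma pmf_compound_pmf_zero_less_1:
  fixes Y :: "nat pmf"
  assumes "pmf N 0 < 1" "pmf Y 0 < 1"
  shows "pmf (compound_pmf N Y) 0 < 1"
proof -
  let ?q = "pmf Y 0"
  have "pmf (compound_pmf N Y) 0 \<le> pmf N 0 * ?q ^ 0 + (1 - pmf N 0) * ?q"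
    unfolding pmf_compound_pmf_zero
    by (rule expectation_le_pmf_split)
       (use power_decreasing[of 1 _ ?q] in \<open>auto simp: pmf_le_1\<close>)
  also have "\<dots> < 1"
  proof -
    have "(1 - pmf N 0) * ?q < (1 - pmf N 0) * 1"
      using assms by (intro mult_strict_left_mono) auto
    then show ?thesis
      by simp
  qed
  finally show ?thesis .
qed

lemma pmf_gw_pmf_zero_mono: "pmf (gw_pmf P n) 0 \<le> pmf (gw_pmf P (Suc n)) 0"
proof -
  have "pmf (gw_pmf P n) 0 + pmf (gw_pmf P n) 1 * pmf P 0 ^ 1 \<le> pmf (gw_pmf P (Suc n)) 0"
    unfolding gw_pmf_Suc' by (rule pmf_compound_pmf_zero_ge_add) simp
  moreover have "0 \<le> pmf (gw_pmf P n) 1 * pmf P 0 ^ 1"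
    by simp
  ultimately show ?thesis
    by linarith
qed

lemma pmf_gw_pmf_zero_less_1:
  assumes "pmf P 0 < 1"
  shows "pmf (gw_pmf P n) 0 < 1"
  by (induction n) (simp_all add: pmf_return assms pmf_compound_pmf_zero_less_1)

lemma sum_pmf_le_1: "finite S \<Longrightarrow> sum (pmf X) S \<le> 1"
  by (metis measure_measure_pmf_finite measure_pmf.prob_le_1)

lemma pmf_conv_pow_pmf_pos_le:
  fixes Y :: "nat pmf"
  assumes "1 \<le> k" "\<And>x. 1 \<le> x \<Longrightarrow> pmf Y x \<le> b"
  shows "pmf (conv_pow_pmf j Y) k \<le> b * (\<Sum>i<j. pmf Y 0 ^ i)"
  using assms(1)
proof (induction j arbitrary: k)
  case (Suc j)
  let ?C = "conv_pow_pmf j Y"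
  have b: "0 \<le> b"
    using assms(2)[of 1] pmf_nonneg[of Y 1] by linarith
  have "pmf (conv_pow_pmf (Suc j) Y) k
      = pmf Y 0 * pmf ?C k + (\<Sum>i\<in>{1..k}. pmf Y i * pmf ?C (k - i))"
    by (simp add: pmf_conv_pmf_nat atMost_atLeast0 sum.atLeast_Suc_atMost)
  also have "(\<Sum>i\<in>{1..k}. pmf Y i * pmf ?C (k - i)) \<le> (\<Sum>i\<in>{1..k}. b * pmf ?C (k - i))"
    by (intro sum_mono mult_right_mono assms(2)) auto
  also have "\<dots> = b * sum (pmf ?C) ((\<lambda>i. k - i) ` {1..k})"
    by (subst sum.reindex) (auto simp: inj_on_def sum_distrib_left)
  also have "\<dots> \<le> b"
    by (intro mult_right_le_one_le sum_pmf_le_1 sum_nonneg b) auto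
  also have "pmf Y 0 * pmf ?C k \<le> pmf Y 0 * (b * (\<Sum>i<j. pmf Y 0 ^ i))"
    using Suc by (intro mult_left_mono) auto
  also have "pmf Y 0 * (b * (\<Sum>i<j. pmf Y 0 ^ i)) + b = b * (\<Sum>i<Suc j. pmf Y 0 ^ i)"
    unfolding sum.lessThan_Suc_shift by (simp add: sum_distrib_left algebra_simps)
  finally show ?case
    by simp
qed (simp add: pmf_return)

definition sup_pos_pmf :: "nat pmf \<Rightarrow> real" where
  "sup_pos_pmf X = (SUP k\<in>{1..}. pmf X k)"

lemma bdd_above_pmf: "bdd_above (pmf X ` S)"
  by (rule bdd_aboveI[where M=1]) (auto simp: pmf_le_1)

lemma pmf_le_sup_pos_pmf: "1 \<le> k \<Longrightarrow> pmf X k \<le> sup_pos_pmf X"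
  unfolding sup_pos_pmf_def by (rule cSUP_upper) (auto simp: bdd_above_pmf)

lemma sup_pos_pmf_nonneg: "0 \<le> sup_pos_pmf X"
  using pmf_le_sup_pos_pmf[of 1 X] pmf_nonneg[of X 1] by linarith

lemma sup_pos_compound_pmf_le:
  fixes Y :: "nat pmf"
  assumes "pmf Y 0 < 1"
  shows "sup_pos_pmf (compound_pmf N Y)
           \<le> sup_pos_pmf Y / (1 - pmf Y 0) * (1 - pmf (compound_pmf N Y) 0)"
  unfolding sup_pos_pmf_def[of "compound_pmf N Y"]
proof (rule cSUP_least)
  fix k :: nat
  assume k: "k \<in> {1..}"
  let ?q = "pmf Y 0"
  define c where "c = sup_pos_pmf Y / (1 - ?q)"
  have c: "0 \<le> c"
    using assms by (simp add: c_def sup_pos_pmf_nonneg)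
  have q: "0 \<le> ?q ^ i" "?q ^ i \<le> 1" for i
    by (simp_all add: power_le_one pmf_le_1)
  have c_bound: "\<bar>c * (1 - ?q ^ i)\<bar> \<le> c" for i
    unfolding abs_le_iff
    using q[of i] mult_nonneg_nonneg[OF c, of "1 - ?q ^ i"] mult_right_le_one_le[OF c, of "1 - ?q ^ i"]
    by linarith
  have conv_le: "pmf (conv_pow_pmf i Y) k \<le> c * (1 - ?q ^ i)" for i
  proof -
    have "pmf (conv_pow_pmf i Y) k \<le> sup_pos_pmf Y * (\<Sum>l<i. ?q ^ l)"
      using k by (intro pmf_conv_pow_pmf_pos_le pmf_le_sup_pos_pmf) auto
    also have "\<dots> = c * (1 - ?q ^ i)"
      using assms by (simp add: c_def one_diff_power_eq[symmetric] field_simps)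
    finally show ?thesis .
  qed
  have "pmf (compound_pmf N Y) k \<le> measure_pmf.expectation N (\<lambda>i. c * (1 - ?q ^ i))"
    unfolding pmf_compound_pmf
    by (intro integral_mono conv_le integrable_measure_pmf_bounded[where B=1]
          integrable_measure_pmf_bounded[where B=c] c_bound) (simp add: pmf_le_1)
  also have "\<dots> = c * (1 - pmf (compound_pmf N Y) 0)"
    unfolding pmf_compound_pmf_zero using q
    by (subst integral_mult_right_zero, subst Bochner_Integration.integral_diff)
       (auto intro!: integrable_measure_pmf_bounded[where B=1])
  finally show
    "pmf (compound_pmf N Y) k \<le> sup_pos_pmf Y / (1 - ?q) * (1 - pmf (compound_pmf N Y) 0)"
    by (simp only: c_def)
qed auto

lemma sup_pos_gw_pmf_antimono:
  assumes "pmf P 0 < 1"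
  shows "sup_pos_pmf (gw_pmf P (Suc n)) \<le> sup_pos_pmf (gw_pmf P n)"
proof -
  let ?q = "pmf (gw_pmf P n) 0"
  have q: "?q < 1"
    by (rule pmf_gw_pmf_zero_less_1[OF assms])
  have "sup_pos_pmf (gw_pmf P (Suc n))
      \<le> sup_pos_pmf (gw_pmf P n) / (1 - ?q) * (1 - pmf (gw_pmf P (Suc n)) 0)"
    using sup_pos_compound_pmf_le[OF q] by simp
  also have "\<dots> \<le> sup_pos_pmf (gw_pmf P n) / (1 - ?q) * (1 - ?q)"
    using q pmf_gw_pmf_zero_mono[of P n]
    by (intro mult_left_mono) (auto simp: sup_pos_pmf_nonneg)
  finally show ?thesis
    using q by simp
qed

section \<open>Maximal masses of convolution powers\<close>

definition max_pmf :: "nat pmf \<Rightarrow> real" where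
  "max_pmf X = (SUP k. pmf X k)"

lemma pmf_le_max_pmf: "pmf X k \<le> max_pmf X"
  unfolding max_pmf_def by (rule cSUP_upper) (auto simp: bdd_above_pmf)

lemma max_pmf_nonneg: "0 \<le> max_pmf X"
  using pmf_le_max_pmf[of X 0] pmf_nonneg[of X 0] by linarith

lemma pmf_conv_pmf_le_split:
  fixes A B :: "nat pmf"
  shows "pmf (conv_pmf A B) k
           \<le> pmf A w * (if w \<le> k then pmf B (k - w) else 0) + (1 - pmf A w) * max_pmf B"
proof -
  have "pmf (conv_pmf A B) k = measure_pmf.expectation A (\<lambda>a. pmf (map_pmf ((+) a) B) k)"
    by (simp add: conv_pmf_def pmf_bind)
  also have "\<dots> \<le> pmf A w * pmf (map_pmf ((+) w) B) k + (1 - pmf A w) * max_pmf B"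
    by (rule expectation_le_pmf_split) (auto simp: pmf_map_add_nat pmf_le_max_pmf max_pmf_nonneg)
  finally show ?thesis
    by (simp add: pmf_map_add_nat)
qed

lemma max_pmf_conv_pmf_le:
  fixes A B :: "nat pmf"
  shows "max_pmf (conv_pmf A B) \<le> max_pmf B"
  unfolding max_pmf_def[of "conv_pmf A B"]
proof (rule cSUP_least)
  fix k
  have "pmf (conv_pmf A B) k \<le> pmf A 0 * pmf B k + (1 - pmf A 0) * max_pmf B"
    using pmf_conv_pmf_le_split[of A B k 0] by simp
  also have "\<dots> \<le> pmf A 0 * max_pmf B + (1 - pmf A 0) * max_pmf B"
    by (intro add_right_mono mult_left_mono pmf_le_max_pmf) auto
  finally show "pmf (conv_pmf A B) k \<le> max_pmf B"
    by (simp add: algebra_simps)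
qed simp

lemma max_pmf_conv_pow_pmf_antimono:
  fixes P :: "nat pmf"
  shows "i \<le> j \<Longrightarrow> max_pmf (conv_pow_pmf j P) \<le> max_pmf (conv_pow_pmf i P)"
proof (induction j rule: dec_induct)
  case (step j)
  then show ?case
    using max_pmf_conv_pmf_le[of P "conv_pow_pmf j P"] by simp
qed simp

lemma pmf_conv_pmf_near_max_shift:
  fixes A B :: "nat pmf"
  assumes near: "M - D \<le> pmf (conv_pmf A B) k" and max_le: "max_pmf B \<le> M"
    and e: "0 < e" "e \<le> pmf A w" and D: "0 \<le> D" "D < e * M"
  shows "w \<le> k \<and> M - D / e \<le> pmf B (k - w)"
proof -
  define X where "X = (if w \<le> k then pmf B (k - w) else 0)"
  have pw: "0 < pmf A w"
    using e by linarith
  have "M - D \<le> pmf A w * X + (1 - pmf A w) * max_pmf B"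
    using near pmf_conv_pmf_le_split[of A B k w] by (simp add: X_def)
  also have "\<dots> \<le> pmf A w * X + (1 - pmf A w) * M"
    using max_le by (intro add_left_mono mult_left_mono) (auto simp: pmf_le_1)
  finally have wX: "pmf A w * M - D \<le> pmf A w * X"
    by (simp add: algebra_simps)
  have "0 < M"
    using e D by (intro zero_less_mult_pos[of e M]) auto
  then have "e * M \<le> pmf A w * M"
    using e by (intro mult_right_mono) auto
  then have "0 < pmf A w * X"
    using wX D by linarith
  then have "0 < X"
    using pw by (rule zero_less_mult_pos)
  then have "w \<le> k"
    by (auto simp: X_def split: if_splits)
  have "M - D / e \<le> M - D / pmf A w"
    using e D by (intro diff_left_mono divide_left_mono) auto
  also have "\<dots> = (pmf A w * M - D) / pmf A w"
    using pw by (simp add: diff_divide_distrib)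
  also have "\<dots> \<le> X"
    using wX pw by (simp add: pos_divide_le_eq mult.commute)
  finally show ?thesis
    using \<open>w \<le> k\<close> by (simp add: X_def)
qed

lemma add_eq_Suc_lincomb_cases:
  fixes a b t u v :: nat
  assumes "a + b = Suc t"
  obtains a' b' w where "a' + b' = t" "w = u \<or> w = v" "a * u + b * v = (a' * u + b' * v) + w"
proof (cases a)
  case 0
  then show ?thesis
    using that[of 0 "b - 1" v] assms by (cases b) auto
next
  case (Suc a')
  then show ?thesis
    using that[of a' b u] assms by auto
qed

lemma conv_pow_pmf_near_max_spread:
  fixes P :: "nat pmf"
  assumes max_le: "\<And>i. j \<le> i \<Longrightarrow> max_pmf (conv_pow_pmf i P) \<le> M"
    and e: "0 < e" "e \<le> pmf P u" "e \<le> pmf P v"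
    and D: "0 \<le> D" "D / e ^ t < e * M"
    and near: "M - D \<le> pmf (conv_pow_pmf (t + j) P) k"
    and ab: "a + b = t"
  shows "a * u + b * v \<le> k \<and> M - D / e ^ t \<le> pmf (conv_pow_pmf j P) (k - (a * u + b * v))"
  using D near ab
proof (induction t arbitrary: a b k D)
  case 0
  then show ?case by simp
next
  case (Suc t)
  have "e ^ Suc t \<le> 1"
    using e pmf_le_1[of P u] by (intro power_le_one) auto
  then have "D \<le> D / e ^ Suc t"
    using e Suc.prems(1) by (simp add: le_divide_eq mult_right_le_one_le)
  then have D_small: "D < e * M"
    using Suc.prems(2) by linarith
  obtain a' b' w where ab': "a' + b' = t" and "w = u \<or> w = v"
    and shift: "a * u + b * v = (a' * u + b' * v) + w"
    using add_eq_Suc_lincomb_cases[OF Suc.prems(4)] by blast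
  then have w: "e \<le> pmf P w"
    using e by auto
  have "M - D \<le> pmf (conv_pmf P (conv_pow_pmf (t + j) P)) k"
    using Suc.prems(3) by simp
  then have w_le: "w \<le> k" and near': "M - D / e \<le> pmf (conv_pow_pmf (t + j) P) (k - w)"
    using pmf_conv_pmf_near_max_shift[OF _ max_le e(1) w Suc.prems(1) D_small] by auto
  have "(D / e) / e ^ t < e * M"
    using Suc.prems(2) by (simp add: field_simps)
  then have IH: "a' * u + b' * v \<le> k - w \<and>
      M - (D / e) / e ^ t \<le> pmf (conv_pow_pmf j P) (k - w - (a' * u + b' * v))"
    using Suc.IH[OF _ _ near' ab'] e Suc.prems(1) by auto
  moreover have "k - (a * u + b * v) = k - w - (a' * u + b' * v)"
    using shift by simp
  moreover have "(D / e) / e ^ t = D / e ^ Suc t"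
    by simp
  ultimately show ?case
    using w_le shift by auto
qed

lemma inj_on_lincomb_nat:
  fixes u v m :: nat
  assumes "u \<noteq> v"
  shows "inj_on (\<lambda>a. a * u + (m - a) * v) {..m}"
proof (rule inj_onI)
  fix a1 a2
  assume a: "a1 \<in> {..m}" "a2 \<in> {..m}"
    and eq: "a1 * u + (m - a1) * v = a2 * u + (m - a2) * v"
  have "int a1 * (int u - int v) = int a2 * (int u - int v)"
    using arg_cong[OF eq, of int] a by (simp add: of_nat_diff algebra_simps)
  then show "a1 = a2"
    using assms by simp
qed

lemma lincomb_points_mass_le_1:
  fixes X :: "nat pmf" and u v m k :: nat
  assumes uv: "u \<noteq> v"
    and mass: "\<And>a. a \<le> m \<Longrightarrow>
      a * u + (m - a) * v \<le> k \<and> d \<le> pmf X (k - (a * u + (m - a) * v))"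
  shows "real (Suc m) * d \<le> 1"
proof -
  let ?pt = "\<lambda>a. k - (a * u + (m - a) * v)"
  have "inj_on ?pt {..m}"
  proof (rule inj_onI)
    fix a1 a2
    assume a: "a1 \<in> {..m}" "a2 \<in> {..m}" "?pt a1 = ?pt a2"
    moreover have "a1 * u + (m - a1) * v \<le> k" "a2 * u + (m - a2) * v \<le> k"
      using mass a(1,2) by auto
    ultimately have "a1 * u + (m - a1) * v = a2 * u + (m - a2) * v"
      by (metis diff_diff_cancel)
    then show "a1 = a2"
      using inj_on_lincomb_nat[OF uv, of m] a by (auto dest: inj_onD)
  qed
  then have "real (Suc m) * d \<le> sum (pmf X) (?pt ` {..m})"
    using sum_bounded_below[of "?pt ` {..m}" d] mass by (auto simp: card_image)
  also have "\<dots> \<le> 1"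
    by (rule sum_pmf_le_1) simp
  finally show ?thesis .
qed

lemma conv_pow_pmf_near_limit_exists:
  fixes P :: "nat pmf"
  assumes lim: "(\<lambda>j. max_pmf (conv_pow_pmf j P)) \<longlonglongrightarrow> c"
    and ge: "\<And>j. c \<le> max_pmf (conv_pow_pmf j P)" and "0 < \<delta>"
  obtains j k
  where "max_pmf (conv_pow_pmf j P) < c + \<delta>" "c - \<delta> < pmf (conv_pow_pmf (m + j) P) k"
proof -
  obtain j where j: "max_pmf (conv_pow_pmf j P) < c + \<delta>"
    using order_tendstoD(2)[OF lim, of "c + \<delta>"] assms(3) by (auto simp: eventually_sequentially)
  obtain k where k: "max_pmf (conv_pow_pmf (m + j) P) - \<delta> < pmf (conv_pow_pmf (m + j) P) k"
    using less_cSUP_iff[of UNIV "pmf (conv_pow_pmf (m + j) P)"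
        "max_pmf (conv_pow_pmf (m + j) P) - \<delta>"] assms(3)
    by (auto simp: max_pmf_def bdd_above_pmf)
  show ?thesis
    using k ge[of "m + j"] by (intro that[OF j, of k]) linarith
qed

lemma conv_pow_pmf_spread_of_limit:
  fixes P :: "nat pmf"
  assumes lim: "(\<lambda>j. max_pmf (conv_pow_pmf j P)) \<longlonglongrightarrow> c"
    and ge: "\<And>j. c \<le> max_pmf (conv_pow_pmf j P)" and c: "0 < c"
    and e: "0 < e" "e \<le> pmf P u" "e \<le> pmf P v"
  obtains j k where "\<And>a. a \<le> m \<Longrightarrow>
    a * u + (m - a) * v \<le> k \<and> c / 2 \<le> pmf (conv_pow_pmf j P) (k - (a * u + (m - a) * v))"
proof -
  have "e \<le> 1"
    using e pmf_le_1[of P u] by linarith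
  \<comment> \<open>After m backward steps the deficit D grows to \<open>c e / 4\<close>, which stays below
    \<open>e c\<close> and leaves masses of at least \<open>c / 2\<close>.\<close>
  define D where "D = c * e ^ (Suc m) / 4"
  have D: "0 < D" "D / e ^ m = c * e / 4"
    using c e by (simp_all add: D_def)
  obtain j k where j: "max_pmf (conv_pow_pmf j P) < c + D / 2"
    and k: "c - D / 2 < pmf (conv_pow_pmf (m + j) P) k"
    using conv_pow_pmf_near_limit_exists[OF lim ge, of "D / 2"] D by auto
  define M where "M = max_pmf (conv_pow_pmf j P)"
  have M: "c \<le> M" "M < c + D / 2"
    using ge j by (auto simp: M_def)
  have max_le: "max_pmf (conv_pow_pmf i P) \<le> M" if "j \<le> i" for i
    using that by (simp add: M_def max_pmf_conv_pow_pmf_antimono)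
  have near: "M - D \<le> pmf (conv_pow_pmf (m + j) P) k"
    using k M by linarith
  have small: "D / e ^ m < e * M"
    using c e M by (simp add: D)
  have "c * e \<le> c"
    using c e \<open>e \<le> 1\<close> by (intro mult_right_le_one_le) auto
  then have c_le: "c / 2 \<le> M - D / e ^ m"
    unfolding D(2) using M(1) c by linarith
  show ?thesis
  proof (rule that)
    fix a
    assume "a \<le> m"
    then have "a * u + (m - a) * v \<le> k \<and>
        M - D / e ^ m \<le> pmf (conv_pow_pmf j P) (k - (a * u + (m - a) * v))"
      using D(1) small by (intro conv_pow_pmf_near_max_spread[OF max_le e _ _ near]) auto
    then show "a * u + (m - a) * v \<le> k \<and>
        c / 2 \<le> pmf (conv_pow_pmf j P) (k - (a * u + (m - a) * v))"
      using c_le by linarith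
  qed
qed

text \<open>If the maximal masses decreased to some c > 0, a nearly maximal mass of a late convolution
  power would force masses of at least c/2 at m + 1 distinct points of an earlier one, which is
  impossible once (m + 1) c / 2 > 1.\<close>

lemma max_pmf_conv_pow_pmf_tendsto_0:
  fixes P :: "nat pmf"
  assumes uv: "u \<noteq> v" and pos: "0 < pmf P u" "0 < pmf P v"
  shows "(\<lambda>j. max_pmf (conv_pow_pmf j P)) \<longlonglongrightarrow> 0"
proof -
  let ?g = "\<lambda>j. max_pmf (conv_pow_pmf j P)"
  have "decseq ?g"
    by (auto intro!: decseq_SucI max_pmf_conv_pow_pmf_antimono)
  then obtain c where lim: "?g \<longlonglongrightarrow> c" and ge: "\<And>j. c \<le> ?g j"
    using decseq_convergent[of ?g 0] max_pmf_nonneg by blast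
  have "c = 0"
  proof (rule ccontr)
    assume "c \<noteq> 0"
    moreover have "0 \<le> c"
      using lim max_pmf_nonneg by (intro LIMSEQ_le_const) auto
    ultimately have c: "0 < c"
      by simp
    let ?e = "min (pmf P u) (pmf P v)"
    have e: "0 < ?e" "?e \<le> pmf P u" "?e \<le> pmf P v"
      using pos by auto
    obtain m :: nat where m: "2 / c < m"
      using reals_Archimedean2 by blast
    obtain j k where "\<And>a. a \<le> m \<Longrightarrow>
        a * u + (m - a) * v \<le> k \<and> c / 2 \<le> pmf (conv_pow_pmf j P) (k - (a * u + (m - a) * v))"
      using conv_pow_pmf_spread_of_limit[OF lim ge c e] by blast
    then have "real (Suc m) * (c / 2) \<le> 1"
      by (rule lincomb_points_mass_le_1[OF uv])
    then show False
      using m c by (simp add: field_simps)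
  qed
  with lim show ?thesis
    by simp
qed

section \<open>Convergence of the positive masses\<close>

lemma pmf_conv_pow_pmf_below:
  fixes Y :: "nat pmf"
  assumes "pmf Y 0 = 0"
  shows "k < i \<Longrightarrow> pmf (conv_pow_pmf i Y) k = 0"
proof (induction i arbitrary: k)
  case (Suc i)
  have "pmf Y x * pmf (conv_pow_pmf i Y) (k - x) = 0" if "x \<le> k" for x
    using assms Suc that by (cases x) auto
  then show ?case
    unfolding conv_pow_pmf.simps pmf_conv_pmf_nat by (intro sum.neutral) auto
qed simp

lemma pmf_conv_pow_pmf_diag:
  fixes Y :: "nat pmf"
  assumes "pmf Y 0 = 0"
  shows "pmf (conv_pow_pmf i Y) i = pmf Y 1 ^ i"
proof (induction i)
  case (Suc i)
  define f where "f x = pmf Y x * pmf (conv_pow_pmf i Y) (Suc i - x)" for x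
  have "f x = 0" if "x \<in> {..Suc i} - {1}" for x
    using that assms pmf_conv_pow_pmf_below[OF assms, of "Suc i - x" i]
    by (cases x) (auto simp: f_def)
  then have "sum f ({..Suc i} - {1}) = 0"
    by (rule sum.neutral[OF ballI])
  then have "pmf (conv_pow_pmf (Suc i) Y) (Suc i) = f 1"
    unfolding conv_pow_pmf.simps pmf_conv_pmf_nat f_def[symmetric]
    by (subst sum.remove[of _ 1]) auto
  then show ?case
    using Suc by (simp add: f_def)
qed (simp add: pmf_return)

lemma pmf_compound_pmf_le_of_zero:
  fixes Y :: "nat pmf"
  assumes "pmf Y 0 = 0" "1 \<le> j"
  shows "pmf (compound_pmf N Y) j \<le> (\<Sum>i<j. pmf N i) + pmf Y 1 * pmf N j"
proof -
  let ?h = "\<lambda>i. pmf (conv_pow_pmf i Y) j"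
  have "pmf (compound_pmf N Y) j = (\<Sum>i\<le>j. ?h i * pmf N i)"
    unfolding pmf_compound_pmf
    by (rule integral_measure_pmf_real)
       (use pmf_conv_pow_pmf_below[OF assms(1), of j] in \<open>auto simp: not_le[symmetric]\<close>)
  also have "\<dots> = (\<Sum>i<j. ?h i * pmf N i) + pmf Y 1 ^ j * pmf N j"
    by (simp add: lessThan_Suc_atMost[symmetric] pmf_conv_pow_pmf_diag[OF assms(1)])
  also have "\<dots> \<le> (\<Sum>i<j. pmf N i) + pmf Y 1 * pmf N j"
  proof (intro add_mono sum_mono mult_right_mono)
    show "?h i * pmf N i \<le> pmf N i" for i
      by (simp add: mult_left_le_one_le pmf_le_1)
    show "pmf Y 1 ^ j \<le> pmf Y 1"
      using power_decreasing[of 1 j "pmf Y 1"] assms(2) by (simp add: pmf_le_1)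
  qed simp
  finally show ?thesis .
qed

lemma pmf_compound_pmf_zero_of_zero:
  fixes Y :: "nat pmf"
  assumes "pmf Y 0 = 0"
  shows "pmf (compound_pmf N Y) 0 = pmf N 0"
proof -
  have "pmf (compound_pmf N Y) 0 = (\<Sum>i\<in>{0}. 0 ^ i * pmf N i)"
    unfolding pmf_compound_pmf_zero assms by (rule integral_measure_pmf_real) auto
  then show ?thesis
    by simp
qed

lemma pmf_gw_pmf_zero_of_zero:
  assumes "pmf P 0 = 0"
  shows "pmf (gw_pmf P n) 0 = 0"
  by (induction n) (simp_all add: gw_pmf_Suc' pmf_compound_pmf_zero_of_zero assms pmf_return)

lemma contraction_tendsto_0:
  fixes x e :: "nat \<Rightarrow> real"
  assumes step: "\<And>n. x (Suc n) \<le> e n + l * x n"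
    and x: "\<And>n. 0 \<le> x n" "\<And>n. x n \<le> 1"
    and l: "0 \<le> l" "l < 1" and e: "e \<longlonglongrightarrow> 0"
  shows "x \<longlonglongrightarrow> 0"
proof (rule LIMSEQ_I)
  fix r :: real
  assume r: "0 < r"
  obtain N where N: "\<And>n. N \<le> n \<Longrightarrow> e n < r * (1 - l) / 2"
    using order_tendstoD(2)[OF e, of "r * (1 - l) / 2"] r l by (auto simp: eventually_sequentially)
  have bound: "x (N + t) \<le> l ^ t + r / 2" for t
  proof (induction t)
    case 0
    then show ?case
      using x(2)[of N] r by simp
  next
    case (Suc t)
    have "x (N + Suc t) \<le> r * (1 - l) / 2 + l * (l ^ t + r / 2)"
      using step[of "N + t"] N[of "N + t"] mult_left_mono[OF Suc l(1)] by simp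
    also have "\<dots> = l ^ Suc t + r / 2"
      by (simp add: field_simps)
    finally show ?case .
  qed
  obtain T where T: "\<And>t. T \<le> t \<Longrightarrow> l ^ t < r / 2"
    using order_tendstoD(2)[OF LIMSEQ_power_zero[of l], of "r / 2"] r l
    by (auto simp: eventually_sequentially)
  have "norm (x n - 0) < r" if "N + T \<le> n" for n
  proof -
    have "x n \<le> l ^ (n - N) + r / 2"
      using bound[of "n - N"] that by simp
    moreover have "l ^ (n - N) < r / 2"
      using T that by simp
    ultimately show ?thesis
      using x(1)[of n] by simp
  qed
  then show "\<exists>n0. \<forall>n\<ge>n0. norm (x n - 0) < r"
    by blast
qed

lemma pmf_gw_pmf_tendsto_0_of_pos:
  assumes "0 < pmf P 0" "1 \<le> j"
  shows "(\<lambda>n. pmf (gw_pmf P n) j) \<longlonglongrightarrow> 0"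
proof -
  let ?q = "\<lambda>n. pmf (gw_pmf P n) 0"
  have "incseq ?q"
    by (rule incseq_SucI) (rule pmf_gw_pmf_zero_mono)
  moreover have "\<forall>n. ?q n \<le> 1"
    by (simp add: pmf_le_1)
  ultimately obtain L where lim: "?q \<longlonglongrightarrow> L"
    by (rule incseq_convergent)
  have "(\<lambda>n. (?q (Suc n) - ?q n) / pmf P 0 ^ j) \<longlonglongrightarrow> (L - L) / pmf P 0 ^ j"
    using assms(1) by (intro tendsto_divide tendsto_diff LIMSEQ_Suc[OF lim] lim tendsto_const) auto
  then have upper_lim: "(\<lambda>n. (?q (Suc n) - ?q n) / pmf P 0 ^ j) \<longlonglongrightarrow> 0"
    by simp
  have upper: "pmf (gw_pmf P n) j \<le> (?q (Suc n) - ?q n) / pmf P 0 ^ j" for n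
  proof -
    have "?q n + pmf (gw_pmf P n) j * pmf P 0 ^ j \<le> ?q (Suc n)"
      unfolding gw_pmf_Suc' by (rule pmf_compound_pmf_zero_ge_add[OF assms(2)])
    then show ?thesis
      using assms(1) by (simp add: pos_le_divide_eq)
  qed
  show ?thesis
    by (rule tendsto_sandwich[OF _ _ tendsto_const upper_lim])
       (simp_all add: upper del: gw_pmf.simps)
qed

lemma pmf_gw_pmf_tendsto_0_of_zero:
  assumes "pmf P 0 = 0" "pmf P 1 < 1"
  shows "(\<lambda>n. pmf (gw_pmf P n) j) \<longlonglongrightarrow> 0"
proof (induction j rule: less_induct)
  case (less j)
  show ?case
  proof (cases "j = 0")
    case True
    then show ?thesis
      by (simp add: pmf_gw_pmf_zero_of_zero assms(1))
  next
    case False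
    have step: "pmf (gw_pmf P (Suc n)) j
        \<le> (\<Sum>i<j. pmf (gw_pmf P n) i) + pmf P 1 * pmf (gw_pmf P n) j" for n
      unfolding gw_pmf_Suc' using False by (intro pmf_compound_pmf_le_of_zero assms(1)) auto
    have "(\<lambda>n. \<Sum>i<j. pmf (gw_pmf P n) i) \<longlonglongrightarrow> 0"
      by (intro tendsto_null_sum less.IH) auto
    then show ?thesis
      using step assms(2)
      by (intro contraction_tendsto_0[where x="\<lambda>n. pmf (gw_pmf P n) j" and l="pmf P 1"])
         (auto simp: pmf_le_1)
  qed
qed

lemma pmf_gw_pmf_tendsto_0:
  assumes "pmf P 1 < 1" "1 \<le> j"
  shows "(\<lambda>n. pmf (gw_pmf P n) j) \<longlonglongrightarrow> 0"
proof (cases "pmf P 0 = 0")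
  case True
  then show ?thesis
    using assms(1) by (rule pmf_gw_pmf_tendsto_0_of_zero)
next
  case False
  then show ?thesis
    using pmf_nonneg[of P 0] assms(2) by (intro pmf_gw_pmf_tendsto_0_of_pos) auto
qed

lemma pmf_conv_pow_pmf_le_tail:
  fixes Y :: "nat pmf"
  assumes "1 \<le> k"
  shows "pmf (conv_pow_pmf i Y) k \<le> indicator {1..J} i + max_pmf (conv_pow_pmf (Suc J) Y)"
proof -
  consider "i = 0" | "1 \<le> i" "i \<le> J" | "Suc J \<le> i"
    by linarith
  then show ?thesis
  proof cases
    case 1
    then show ?thesis
      using assms by (simp add: max_pmf_nonneg)
  next
    case 2
    then show ?thesis
      using pmf_le_1[of "conv_pow_pmf i Y" k] max_pmf_nonneg[of "conv_pow_pmf (Suc J) Y"] by simp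
  next
    case 3
    then show ?thesis
      using pmf_le_max_pmf[of "conv_pow_pmf i Y" k] max_pmf_conv_pow_pmf_antimono[OF 3, of Y]
      by simp
  qed
qed

lemma sup_pos_compound_pmf_le_tail:
  fixes Y :: "nat pmf"
  shows "sup_pos_pmf (compound_pmf N Y)
           \<le> (\<Sum>i\<in>{1..J}. pmf N i) + max_pmf (conv_pow_pmf (Suc J) Y)"
  unfolding sup_pos_pmf_def[of "compound_pmf N Y"]
proof (rule cSUP_least)
  fix k :: nat
  assume k: "k \<in> {1..}"
  let ?c = "max_pmf (conv_pow_pmf (Suc J) Y)"
  have h_le: "pmf (conv_pow_pmf i Y) k \<le> indicator {1..J} i + ?c" for i
    using k by (intro pmf_conv_pow_pmf_le_tail) simp
  have "pmf (compound_pmf N Y) k \<le> measure_pmf.expectation N (\<lambda>i. indicator {1..J} i + ?c)"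
    unfolding pmf_compound_pmf
  proof (rule integral_mono[OF _ _ h_le])
    show "integrable N (\<lambda>i. pmf (conv_pow_pmf i Y) k)"
      by (rule integrable_measure_pmf_bounded[where B=1]) (simp add: pmf_le_1)
    show "integrable N (\<lambda>i. indicator {1..J} i + ?c)"
      by (rule integrable_measure_pmf_bounded[where B="1 + ?c"])
         (simp add: max_pmf_nonneg split: split_indicator)
  qed
  also have "\<dots> = (\<Sum>i\<in>{1..J}. pmf N i) + ?c"
    by (subst Bochner_Integration.integral_add)
       (auto intro!: integrable_measure_pmf_bounded[where B=1] simp: measure_measure_pmf_finite
          split: split_indicator)
  finally show "pmf (compound_pmf N Y) k \<le> (\<Sum>i\<in>{1..J}. pmf N i) + ?c" .
qed auto

lemma sup_pos_gw_pmf_tendsto_0: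
  assumes uv: "u \<noteq> v" "0 < pmf P u" "0 < pmf P v" and P1: "pmf P 1 < 1"
  shows "(\<lambda>n. sup_pos_pmf (gw_pmf P n)) \<longlonglongrightarrow> 0"
proof (rule order_tendstoI)
  fix a :: real
  assume "a < 0"
  then have "a < sup_pos_pmf (gw_pmf P n)" for n
    using sup_pos_pmf_nonneg[of "gw_pmf P n"] by linarith
  then show "\<forall>\<^sub>F n in sequentially. a < sup_pos_pmf (gw_pmf P n)"
    by simp
next
  fix a :: real
  assume a: "0 < a"
  obtain J where J: "max_pmf (conv_pow_pmf (Suc J) P) < a / 2"
  proof -
    obtain N where "\<forall>n\<ge>N. max_pmf (conv_pow_pmf n P) < a / 2"
      using order_tendstoD(2)[OF max_pmf_conv_pow_pmf_tendsto_0[OF uv], of "a / 2"] a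
      by (auto simp: eventually_sequentially)
    then show ?thesis
      using that[of N] le_SucI[OF order_refl] by blast
  qed
  have "(\<lambda>n. \<Sum>i\<in>{1..J}. pmf (gw_pmf P n) i) \<longlonglongrightarrow> 0"
    by (intro tendsto_null_sum pmf_gw_pmf_tendsto_0 P1) auto
  then have "\<forall>\<^sub>F n in sequentially. (\<Sum>i\<in>{1..J}. pmf (gw_pmf P n) i) < a / 2"
    by (rule order_tendstoD(2)) (use a in simp)
  then have "\<forall>\<^sub>F n in sequentially. sup_pos_pmf (gw_pmf P (Suc n)) < a"
  proof (rule eventually_mono)
    fix n
    assume "(\<Sum>i\<in>{1..J}. pmf (gw_pmf P n) i) < a / 2"
    then show "sup_pos_pmf (gw_pmf P (Suc n)) < a"
      using sup_pos_compound_pmf_le_tail[of "gw_pmf P n" P J] J by (simp only: gw_pmf_Suc')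
  qed
  then show "\<forall>\<^sub>F n in sequentially. sup_pos_pmf (gw_pmf P n) < a"
    by (rule eventually_sequentially_Suc[THEN iffD1])
qed

lemma pmf_two_points_pos:
  assumes "\<And>k. pmf P k < 1"
  obtains u v where "u \<noteq> v" "0 < pmf P u" "0 < pmf P v"
proof -
  obtain u where u: "u \<in> set_pmf P"
    using set_pmf_not_empty[of P] by blast
  have "\<not> set_pmf P \<subseteq> {u}"
  proof
    assume "set_pmf P \<subseteq> {u}"
    then have "P = return_pmf u"
      by (simp add: set_pmf_subset_singleton)
    then show False
      using assms[of u] by simp
  qed
  then obtain v where "v \<in> set_pmf P" "v \<noteq> u"
    by blast
  then show ?thesis
    using that[of v u] u by (simp add: pmf_positive)
qed

theorem theorem3:
  fixes p :: "real fps"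
  assumes coeff_bounds: "\<forall>k. 0 \<le> fps_nth p k \<and> fps_nth p k < 1"
    and coeff_sum: "(\<lambda>k. fps_nth p k) sums 1"
  shows "(\<forall>n\<ge>1. fps_nth (fps_iter p n) 0 \<le> fps_nth (fps_iter p (Suc n)) 0)
       \<and> (\<forall>n\<ge>1. sup_coeff (fps_iter p (Suc n)) \<le> sup_coeff (fps_iter p n))
       \<and> (\<lambda>n. sup_coeff (fps_iter p n)) \<longlonglongrightarrow> 0"
proof -
  define P where "P = embed_pmf (fps_nth p)"
  have pmf_P: "pmf P k = fps_nth p k" for k
    unfolding P_def by (rule pmf_embed_pmf_sums) (use coeff_bounds coeff_sum in auto)
  have coeff: "fps_nth (fps_iter p n) k = pmf (gw_pmf P n) k" for n k
    by (rule fps_nth_iter_eq_pmf) (simp add: pmf_P)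
  have sup: "sup_coeff (fps_iter p n) = sup_pos_pmf (gw_pmf P n)" for n
    by (simp add: sup_coeff_def sup_pos_pmf_def coeff)
  have less_1: "pmf P k < 1" for k
    using coeff_bounds by (simp add: pmf_P)
  obtain u v where uv: "u \<noteq> v" "0 < pmf P u" "0 < pmf P v"
    using pmf_two_points_pos[OF less_1] by blast
  show ?thesis
    unfolding coeff sup
    by (intro conjI allI impI pmf_gw_pmf_zero_mono sup_pos_gw_pmf_antimono less_1
          sup_pos_gw_pmf_tendsto_0[OF uv less_1])
qed

end
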